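(* Let $K$ be a field and $K[x,x^{-1}]$ the Laurent polynomial algebra, with involution ${}^\natural$ on $\mathbb{M}_2(K[x,x^{-1}])$ given by $\big((f_{ij}(x))\big)^\natural=(f_{ji}(x^{-1}))$. Let $\mathbf{K}_{\mathbb{M}_2(K[x,x^{-1}])}=\{X: X^\natural=-X\}$. Then: (1) If $\mathrm{char}(K)=2$, then $\mathbf{K}_{\mathbb{M}_2(K[x,x^{-1}])}$ is Lie solvable of index $3$ but not Lie nilpotent. (2) If $\mathrm{char}(K)\neq 2$, then $\mathbf{K}_{\mathbb{M}_2(K[x,x^{-1}])}$ is not Lie solvable.
   Context: Lie bracket $[a,b]=ab-ba$; $[S,T]=\mathrm{span}_K\{ab-ba:a\in S,b\in T\}$. For a Lie subalgebra $\mathcal{L}$: $\mathcal{L}^{(0)}=\mathcal{L}$, $\mathcal{L}^{(n)}=[\mathcal{L}^{(n-1)},\mathcal{L}^{(n-1)}]$; $\mathcal{L}^0=\mathcal{L}$, $\mathcal{L}^n=[\mathcal{L}^{n-1},\mathcal{L}]$. Lie solvable (resp. nilpotent) means $\mathcal{L}^{(n)}=0$ (resp. $\mathcal{L}^n=0$) for some $n$; the index of solvability is the smallest such $n$. *)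

theory Defs
  imports "HOL-Analysis.Analysis" "HOL-Library.Poly_Mapping"
begin

text \<open>Laurent polynomials K[x,x^-1] are the group algebra K[Z], i.e. finitely supported
 functions int =>0 K with convolution product (coefficient at n = coefficient of x^n).
 2x2 matrices over them: type (int =>0 K)^2^2 with matrix product (**).\<close>

type_synonym 'a laurent = "int \<Rightarrow>\<^sub>0 'a"
type_synonym 'a lmat2 = "'a laurent ^ 2 ^ 2"

definition lbar :: "'a::zero laurent \<Rightarrow> 'a laurent" where
  "lbar f = Abs_poly_mapping (\<lambda>n. Poly_Mapping.lookup f (- n))"

definition natinv :: "'a::zero lmat2 \<Rightarrow> 'a lmat2" where
  "natinv A = (\<chi> i j. lbar (A $ j $ i))"

definition skewK :: "'a::field lmat2 set" where
  "skewK = {X. natinv X = - X}"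

definition ksmul :: "'a::field \<Rightarrow> 'a lmat2 \<Rightarrow> 'a lmat2" where
  "ksmul c A = (\<chi> i j. Poly_Mapping.single 0 c * A $ i $ j)"

inductive_set kspan :: "'a::field lmat2 set \<Rightarrow> 'a lmat2 set" for S where
  kspan_zero: "0 \<in> kspan S"
| kspan_gen: "a \<in> S \<Longrightarrow> a \<in> kspan S"
| kspan_add: "a \<in> kspan S \<Longrightarrow> b \<in> kspan S \<Longrightarrow> a + b \<in> kspan S"
| kspan_smul: "a \<in> kspan S \<Longrightarrow> ksmul c a \<in> kspan S"

definition lie_bracket :: "'a::field lmat2 \<Rightarrow> 'a lmat2 \<Rightarrow> 'a lmat2" where
  "lie_bracket a b = a ** b - b ** a"

definition lie_brk_set :: "'a::field lmat2 set \<Rightarrow> 'a lmat2 set \<Rightarrow> 'a lmat2 set" where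
  "lie_brk_set S T = kspan {lie_bracket a b | a b. a \<in> S \<and> b \<in> T}"

fun derived :: "'a::field lmat2 set \<Rightarrow> nat \<Rightarrow> 'a lmat2 set" where
  "derived L 0 = L"
| "derived L (Suc n) = lie_brk_set (derived L n) (derived L n)"

fun lower_central :: "'a::field lmat2 set \<Rightarrow> nat \<Rightarrow> 'a lmat2 set" where
  "lower_central L 0 = L"
| "lower_central L (Suc n) = lie_brk_set (lower_central L n) L"

definition lie_solvable :: "'a::field lmat2 set \<Rightarrow> bool" where
  "lie_solvable L \<longleftrightarrow> (\<exists>n. derived L n = {0})"

definition lie_nilpotent :: "'a::field lmat2 set \<Rightarrow> bool" where
  "lie_nilpotent L \<longleftrightarrow> (\<exists>n. lower_central L n = {0})"

definition solvability_index :: "'a::field lmat2 set \<Rightarrow> nat" where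
  "solvability_index L = (LEAST n. derived L n = {0})"

end

theory Submission
  imports Defs
begin

text \<open>
  In characteristic 2 the trace-zero property of a commutator says that its two diagonal entries
  agree; commutators of matrices with equal diagonal entries are scalar, and scalar matrices are
  central. Hence the third derived algebra of any set of 2x2 matrices vanishes. Inside the skew
  elements, the matrices with off-diagonal entries b and b(x^-1) reproduce themselves when bracketed
  with the diagonal idempotents, so they survive in the whole lower central series, and the
  commutator of two of them with b = 1 and b = x is a nonzero element of the second derived algebra.

  In characteristic not 2, consider h = diag(w, -w) with w \<noteq> 0 and antidiagonal e, f whose
  entries form a matrix of nonzero determinant. Then [h, e], [h, f] are antidiagonal and [e, f] is
  of the shape of h, and the new determinant is -4w^2 times the old one, still nonzero because
  K[x,x^-1] is a domain. The skew elements contain such a triple with w = x - x^-1, so no derived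
  algebra vanishes.
\<close>

definition mat2 :: "'b \<Rightarrow> 'b \<Rightarrow> 'b \<Rightarrow> 'b \<Rightarrow> 'b ^ 2 ^ 2" where
  "mat2 a b c d = (\<chi> i j. if i = 1 then (if j = 1 then a else b) else (if j = 1 then c else d))"

lemma mat2_nth [simp]:
  "mat2 a b c d $ 1 $ 1 = a" "mat2 a b c d $ 1 $ 2 = b"
  "mat2 a b c d $ 2 $ 1 = c" "mat2 a b c d $ 2 $ 2 = d"
  by (simp_all add: mat2_def)

lemma mat2_eq_iff [simp]:
  "mat2 a b c d = mat2 a' b' c' d' \<longleftrightarrow> a = a' \<and> b = b' \<and> c = c' \<and> d = d'"
  unfolding vec_eq_iff forall_2 by simp

lemma mat2_eq_0_iff [simp]: "mat2 a b c d = 0 \<longleftrightarrow> a = 0 \<and> b = 0 \<and> c = 0 \<and> d = 0"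
  unfolding vec_eq_iff forall_2 by simp

lemma mat2_uminus: "- mat2 a b c d = mat2 (- a) (- b) (- c) (- d)"
  unfolding vec_eq_iff forall_2 by simp

lemma lie_bracket_nth:
  fixes A B :: "'a::field lmat2"
  shows "lie_bracket A B $ 1 $ 1 = A $ 1 $ 2 * B $ 2 $ 1 - B $ 1 $ 2 * A $ 2 $ 1"
    and "lie_bracket A B $ 1 $ 2
           = A $ 1 $ 1 * B $ 1 $ 2 + A $ 1 $ 2 * B $ 2 $ 2 - (B $ 1 $ 1 * A $ 1 $ 2 + B $ 1 $ 2 * A $ 2 $ 2)"
    and "lie_bracket A B $ 2 $ 1
           = A $ 2 $ 1 * B $ 1 $ 1 + A $ 2 $ 2 * B $ 2 $ 1 - (B $ 2 $ 1 * A $ 1 $ 1 + B $ 2 $ 2 * A $ 2 $ 1)"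
    and "lie_bracket A B $ 2 $ 2 = A $ 2 $ 1 * B $ 1 $ 2 - B $ 2 $ 1 * A $ 1 $ 2"
  by (simp_all add: lie_bracket_def matrix_matrix_mult_def UNIV_2)

lemma lie_bracket_mat2:
  "lie_bracket (mat2 a b c d) (mat2 e f g h :: 'a::field lmat2)
     = mat2 (b * g - f * c) (a * f + b * h - (e * b + f * d))
            (c * e + d * g - (g * a + h * c)) (c * f - g * b)"
  unfolding vec_eq_iff forall_2 by (simp add: lie_bracket_nth)

lemma lie_bracket_trace_zero: "lie_bracket A B $ 2 $ 2 = - (lie_bracket A (B :: 'a::field lmat2) $ 1 $ 1)"
  by (simp add: lie_bracket_nth algebra_simps)

lemma lie_bracket_equal_diag_offdiag:
  fixes A B :: "'a::field lmat2"
  assumes "A $ 1 $ 1 = A $ 2 $ 2" and "B $ 1 $ 1 = B $ 2 $ 2"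
  shows "lie_bracket A B $ 1 $ 2 = 0" and "lie_bracket A B $ 2 $ 1 = 0"
  using assms by (simp_all add: lie_bracket_nth algebra_simps)

lemma lie_bracket_scalar_left:
  fixes A B :: "'a::field lmat2"
  assumes "A $ 1 $ 2 = 0" and "A $ 2 $ 1 = 0" and "A $ 1 $ 1 = A $ 2 $ 2"
  shows "lie_bracket A B = 0"
  using assms unfolding vec_eq_iff forall_2 by (simp add: lie_bracket_nth algebra_simps)

lemma lookup_lbar [simp]: "Poly_Mapping.lookup (lbar f) n = Poly_Mapping.lookup f (- n)"
proof -
  have "{n. Poly_Mapping.lookup f (- n) \<noteq> 0} = uminus ` {n. Poly_Mapping.lookup f n \<noteq> 0}"
    by (auto intro: image_eqI[where x = "- _"])
  then have "finite {n. Poly_Mapping.lookup f (- n) \<noteq> 0}"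
    by (simp add: finite_lookup)
  then show ?thesis
    unfolding lbar_def by (simp add: Abs_poly_mapping_inverse)
qed

lemma lbar_lbar [simp]: "lbar (lbar f) = f"
  by (rule poly_mapping_eqI) simp

lemma lbar_diff [simp]: "lbar (f - g) = lbar f - lbar (g :: 'a::ab_group_add laurent)"
  by (rule poly_mapping_eqI) (simp add: lookup_minus)

lemma lbar_uminus [simp]: "lbar (- f) = - lbar (f :: 'a::ab_group_add laurent)"
  by (rule poly_mapping_eqI) simp

lemma lbar_single [simp]: "lbar (Poly_Mapping.single k v) = Poly_Mapping.single (- k) v"
  by (rule poly_mapping_eqI) (auto simp: lookup_single when_def)

lemma lbar_zero [simp]: "lbar 0 = 0"
  by (rule poly_mapping_eqI) simp

lemma lbar_one [simp]: "lbar (1 :: 'a::zero_neq_one laurent) = 1"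
  by (rule poly_mapping_eqI) (auto simp: lookup_one when_def)

lemma natinv_mat2: "natinv (mat2 a b c d) = mat2 (lbar a) (lbar c) (lbar b) (lbar d)"
  unfolding vec_eq_iff forall_2 natinv_def by simp

abbreviation lvar :: "'a::zero_neq_one laurent" where
  "lvar \<equiv> Poly_Mapping.single 1 1"

lemma single_one_eq_iff [simp]:
  "Poly_Mapping.single k (1 :: 'b::zero_neq_one) = Poly_Mapping.single l 1 \<longleftrightarrow> k = l"
  by (metis lookup_single_eq lookup_single_not_eq zero_neq_one)

lemma laurent_uminus_CHAR_2:
  assumes "CHAR('a::ring_1) = 2"
  shows "- f = (f :: 'a laurent)"
  by (rule poly_mapping_eqI) (simp add: uminus_CHAR_2[OF assms])

lemma laurent_two_neq_zero:
  assumes "CHAR('a::field) \<noteq> 2"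
  shows "(2 :: 'a laurent) \<noteq> 0"
proof
  assume "(2 :: 'a laurent) = 0"
  moreover have "Poly_Mapping.lookup (2 :: 'a laurent) 0 = 2"
    by (simp add: lookup_numeral)
  ultimately have "(2 :: 'a) = 0"
    by simp
  then have "CHAR('a) dvd 2"
    using of_nat_eq_0_iff_char_dvd[of 2, where 'a = 'a] by simp
  then have "CHAR('a) \<le> 2" "CHAR('a) \<noteq> 0"
    by (auto dest: dvd_imp_le intro!: Nat.gr0I)
  with assms CHAR_not_1[where 'a = 'a] show False
    by linarith
qed

lemma lie_bracket_mem_lie_brk_set: "a \<in> S \<Longrightarrow> b \<in> T \<Longrightarrow> lie_bracket a b \<in> lie_brk_set S T"
  unfolding lie_brk_set_def by (rule kspan_gen) blast

lemma lie_brk_set_subset: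
  assumes "\<And>a b. a \<in> S \<Longrightarrow> b \<in> T \<Longrightarrow> lie_bracket a b \<in> V"
    and "0 \<in> V" and "\<And>a b. a \<in> V \<Longrightarrow> b \<in> V \<Longrightarrow> a + b \<in> V"
    and "\<And>c a. a \<in> V \<Longrightarrow> ksmul c a \<in> V"
  shows "lie_brk_set S T \<subseteq> V"
proof
  fix x
  assume "x \<in> lie_brk_set S T"
  then show "x \<in> V"
    unfolding lie_brk_set_def by induction (use assms in blast)+
qed

lemma zero_mem_derived_Suc: "0 \<in> derived L (Suc n)"
  by (simp add: lie_brk_set_def kspan_zero)

lemma ksmul_zero [simp]: "ksmul c 0 = 0"
  unfolding ksmul_def vec_eq_iff by simp

lemma derived_Suc_eq_zero:
  assumes "derived L n = {0}"
  shows "derived L (Suc n) = {0}"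
proof -
  have "lie_brk_set {0} {0} \<subseteq> {0 :: 'a::field lmat2}"
    by (rule lie_brk_set_subset) (simp_all add: lie_bracket_def)
  then show ?thesis
    using assms zero_mem_derived_Suc[of L n] by auto
qed

lemma derived_eq_zero_mono:
  assumes "m \<le> n" and "derived L m = {0}"
  shows "derived L n = {0}"
  using assms(1)
proof (induction n rule: dec_induct)
  case base
  show ?case by (fact assms(2))
next
  case (step k)
  show ?case using step.IH by (rule derived_Suc_eq_zero)
qed

lemma solvability_index_eqI:
  assumes "derived L (Suc n) = {0}" and "derived L n \<noteq> {0}"
  shows "solvability_index L = Suc n"
  unfolding solvability_index_def
proof (rule Least_equality)
  fix m
  assume "derived L m = {0}"
  then show "Suc n \<le> m"
    using assms(2) derived_eq_zero_mono[of m n L] by linarith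
qed (fact assms(1))

lemma derived_1_CHAR_2:
  assumes "CHAR('a::field) = 2"
  shows "derived (L :: 'a lmat2 set) 1 \<subseteq> {A. A $ 1 $ 1 = A $ 2 $ 2}"
proof -
  have "lie_bracket A B $ 1 $ 1 = lie_bracket A B $ 2 $ 2" for A B :: "'a lmat2"
    by (simp add: lie_bracket_trace_zero laurent_uminus_CHAR_2[OF assms])
  then show ?thesis
    by (simp, intro lie_brk_set_subset) (auto simp: ksmul_def)
qed

lemma derived_2_CHAR_2:
  assumes "CHAR('a::field) = 2"
  shows "derived (L :: 'a lmat2 set) 2 \<subseteq> {A. A $ 1 $ 2 = 0 \<and> A $ 2 $ 1 = 0 \<and> A $ 1 $ 1 = A $ 2 $ 2}"
proof -
  have "derived L 2 = lie_brk_set (derived L 1) (derived L 1)"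
    by (simp add: numeral_2_eq_2)
  also have "\<dots> \<subseteq> {A. A $ 1 $ 2 = 0 \<and> A $ 2 $ 1 = 0 \<and> A $ 1 $ 1 = A $ 2 $ 2}"
  proof (rule lie_brk_set_subset)
    fix A B
    assume "A \<in> derived L 1" and "B \<in> derived L 1"
    then have "A $ 1 $ 1 = A $ 2 $ 2" and "B $ 1 $ 1 = B $ 2 $ 2"
      using derived_1_CHAR_2[OF assms, of L] by auto
    then show "lie_bracket A B \<in> {A. A $ 1 $ 2 = 0 \<and> A $ 2 $ 1 = 0 \<and> A $ 1 $ 1 = A $ 2 $ 2}"
      by (simp add: lie_bracket_equal_diag_offdiag lie_bracket_trace_zero
          laurent_uminus_CHAR_2[OF assms])
  qed (auto simp: ksmul_def)
  finally show ?thesis .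
qed

lemma derived_3_CHAR_2:
  assumes "CHAR('a::field) = 2"
  shows "derived (L :: 'a lmat2 set) 3 = {0}"
proof -
  have "derived L 3 = lie_brk_set (derived L 2) (derived L 2)"
    by (simp add: numeral_3_eq_3 numeral_2_eq_2)
  also have "\<dots> \<subseteq> {0}"
    using derived_2_CHAR_2[OF assms, of L]
    by (intro lie_brk_set_subset) (auto intro: lie_bracket_scalar_left)
  finally show ?thesis
    using zero_mem_derived_Suc[of L 2] by (auto simp: numeral_3_eq_3)
qed

lemma skewK_mat2_CHAR_2:
  assumes "CHAR('a::field) = 2"
  shows "mat2 0 b (lbar b) 0 \<in> (skewK :: 'a lmat2 set)"
    and "mat2 1 0 0 0 \<in> (skewK :: 'a lmat2 set)"
    and "mat2 0 0 0 1 \<in> (skewK :: 'a lmat2 set)"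
  unfolding skewK_def by (simp_all add: natinv_mat2 mat2_uminus laurent_uminus_CHAR_2[OF assms])

lemma sym_antidiag_mem_derived_1_CHAR_2:
  assumes "CHAR('a::field) = 2"
  shows "mat2 0 b (lbar b) 0 \<in> derived (skewK :: 'a lmat2 set) 1"
proof -
  have "lie_bracket (mat2 1 0 0 0) (mat2 0 b (lbar b) 0) = mat2 0 b (lbar b) (0 :: 'a laurent)"
    by (simp add: lie_bracket_mat2 laurent_uminus_CHAR_2[OF assms])
  then show ?thesis
    using lie_bracket_mem_lie_brk_set[OF skewK_mat2_CHAR_2(2,1)[OF assms], of b] by simp
qed

lemma derived_2_skewK_neq_zero_CHAR_2:
  assumes "CHAR('a::field) = 2"
  shows "derived (skewK :: 'a lmat2 set) 2 \<noteq> {0}"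
proof -
  let ?D = "mat2 (lbar lvar - lvar) 0 0 (lvar - lbar lvar) :: 'a lmat2"
  have "lie_bracket (mat2 0 1 1 0) (mat2 0 lvar (lbar lvar) 0) = ?D"
    by (simp add: lie_bracket_mat2)
  then have "?D \<in> derived skewK 2"
    using lie_bracket_mem_lie_brk_set[OF sym_antidiag_mem_derived_1_CHAR_2[OF assms]
        sym_antidiag_mem_derived_1_CHAR_2[OF assms], of 1 lvar]
    by (simp add: numeral_2_eq_2)
  moreover have "?D \<noteq> 0"
    by simp
  ultimately show ?thesis
    by blast
qed

lemma sym_antidiag_mem_lower_central_CHAR_2:
  assumes "CHAR('a::field) = 2"
  shows "mat2 0 b (lbar b) 0 \<in> lower_central (skewK :: 'a lmat2 set) n"
proof (induction n)
  case 0
  show ?case using skewK_mat2_CHAR_2(1)[OF assms] by simp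
next
  case (Suc n)
  have "lie_bracket (mat2 0 b (lbar b) 0) (mat2 0 0 0 1) = mat2 0 b (lbar b) (0 :: 'a laurent)"
    by (simp add: lie_bracket_mat2 laurent_uminus_CHAR_2[OF assms])
  then show ?case
    using lie_bracket_mem_lie_brk_set[OF Suc.IH skewK_mat2_CHAR_2(3)[OF assms]] by simp
qed

definition sl2_triple_in :: "'a::field lmat2 set \<Rightarrow> bool" where
  "sl2_triple_in L \<longleftrightarrow> (\<exists>w b c b' c'. w \<noteq> 0 \<and> b * c' - b' * c \<noteq> 0 \<and>
     mat2 w 0 0 (- w) \<in> L \<and> mat2 0 b c 0 \<in> L \<and> mat2 0 b' c' 0 \<in> L)"

lemma sl2_triple_in_lie_brk_set:
  assumes "CHAR('a::field) \<noteq> 2" and "sl2_triple_in (L :: 'a lmat2 set)"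
  shows "sl2_triple_in (lie_brk_set L L)"
proof -
  obtain w b c b' c' where w: "w \<noteq> 0" and det: "b * c' - b' * c \<noteq> 0"
    and h: "mat2 w 0 0 (- w) \<in> L" and e: "mat2 0 b c 0 \<in> L" and f: "mat2 0 b' c' 0 \<in> L"
    using assms(2) unfolding sl2_triple_in_def by blast
  have h_antidiag: "lie_bracket (mat2 w 0 0 (- w)) (mat2 0 x y 0) = mat2 0 (2 * w * x) (- (2 * w * y)) 0"
    for x y :: "'a laurent"
    by (simp add: lie_bracket_mat2 algebra_simps mult_2)
  have "lie_bracket (mat2 0 b c 0) (mat2 0 b' c' 0) = mat2 (b * c' - b' * c) 0 0 (- (b * c' - b' * c))"
    by (simp add: lie_bracket_mat2 algebra_simps)
  then have h': "mat2 (b * c' - b' * c) 0 0 (- (b * c' - b' * c)) \<in> lie_brk_set L L"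
    using lie_bracket_mem_lie_brk_set[OF e f] by simp
  have e': "mat2 0 (2 * w * b) (- (2 * w * c)) 0 \<in> lie_brk_set L L"
    and f': "mat2 0 (2 * w * b') (- (2 * w * c')) 0 \<in> lie_brk_set L L"
    using lie_bracket_mem_lie_brk_set[OF h e] lie_bracket_mem_lie_brk_set[OF h f] h_antidiag by simp_all
  have "(2 * w * b) * (- (2 * w * c')) - (2 * w * b') * (- (2 * w * c))
          = - (2 * 2 * w * w * (b * c' - b' * c))"
    by (simp add: algebra_simps)
  also have "\<dots> \<noteq> 0"
    using laurent_two_neq_zero[OF assms(1)] w det by (metis mult_eq_0_iff neg_equal_0_iff_equal)
  finally show ?thesis
    unfolding sl2_triple_in_def using det h' e' f' by blast
qed

lemma sl2_triple_in_derived: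
  assumes "CHAR('a::field) \<noteq> 2" and "sl2_triple_in (L :: 'a lmat2 set)"
  shows "sl2_triple_in (derived L n)"
  by (induction n) (simp_all add: assms sl2_triple_in_lie_brk_set)

lemma sl2_triple_in_neq_zero: "sl2_triple_in L \<Longrightarrow> L \<noteq> {0}"
  unfolding sl2_triple_in_def by force

lemma sl2_triple_in_skewK: "sl2_triple_in (skewK :: 'a::field lmat2 set)"
proof -
  let ?w = "lvar - lbar lvar :: 'a laurent"
  have "mat2 ?w 0 0 (- ?w) \<in> skewK" and "mat2 0 1 (- 1) 0 \<in> skewK"
    and "mat2 0 lvar (- lbar lvar) 0 \<in> skewK"
    unfolding skewK_def by (simp_all add: natinv_mat2 mat2_uminus)
  moreover have "1 * (- lbar lvar) - lvar * (- 1) = ?w"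
    by simp
  ultimately show ?thesis
    unfolding sl2_triple_in_def by (metis single_one_eq_iff lbar_single right_minus_eq one_neq_neg_one)
qed

theorem corollary3p3:
  shows "(CHAR('a::field) = 2 \<longrightarrow>
            lie_solvable (skewK :: 'a lmat2 set) \<and> solvability_index (skewK :: 'a lmat2 set) = 3
            \<and> \<not> lie_nilpotent (skewK :: 'a lmat2 set))
       \<and> (CHAR('a) \<noteq> 2 \<longrightarrow> \<not> lie_solvable (skewK :: 'a lmat2 set))"
proof (intro conjI impI)
  assume char2: "CHAR('a) = 2"
  show "lie_solvable (skewK :: 'a lmat2 set)"
    unfolding lie_solvable_def using derived_3_CHAR_2[OF char2] by blast
  show "solvability_index (skewK :: 'a lmat2 set) = 3"
    using solvability_index_eqI[of skewK 2] derived_3_CHAR_2[OF char2]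
      derived_2_skewK_neq_zero_CHAR_2[OF char2] by (metis numeral_3_eq_3 numeral_2_eq_2)
  show "\<not> lie_nilpotent (skewK :: 'a lmat2 set)"
    unfolding lie_nilpotent_def
  proof
    assume "\<exists>n. lower_central (skewK :: 'a lmat2 set) n = {0}"
    then obtain n where "lower_central (skewK :: 'a lmat2 set) n = {0}" ..
    with sym_antidiag_mem_lower_central_CHAR_2[OF char2, of 1 n] show False
      by simp
  qed
next
  assume "CHAR('a) \<noteq> 2"
  then show "\<not> lie_solvable (skewK :: 'a lmat2 set)"
    unfolding lie_solvable_def
    using sl2_triple_in_derived sl2_triple_in_skewK sl2_triple_in_neq_zero by blast
qed

end
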